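(* Let $\mathcal{X}$ be a finite alphabet and let $P_0,P_1$ be probability mass functions on $\mathcal{X}$ with the same support $\mathcal{X}$. Let $n>1$, let $k^\star\in(1,n]$ be an integer, and let $\mathcal{D}=(x_1,\dots,x_n)$ be a random dataset with independent entries such that $x_1,\dots,x_{k^\star-1}\sim P_0$ and $x_{k^\star},\dots,x_n\sim P_1$. Consider the estimator $$\hat k\in\arg\max_{k\in[n]} l(\mathcal{D},k),\qquad l(\mathcal{D},k)=\sum_{i=k}^{n}\log\frac{P_1(x_i)}{P_0(x_i)}.$$ Let $s=D^{J}_{\infty}(P_0,P_1)=\max_{x\in\mathcal{X}}\log\frac{P_1(x)}{P_0(x)}-\min_{x\in\mathcal{X}}\log\frac{P_1(x)}{P_0(x)}$ and $C=\min\{D_{\mathrm{KL}}(P_0\|P_1),D_{\mathrm{KL}}(P_1\|P_0)\}$. Then for every $\alpha\in[n]$, the estimator is $(\alpha,\beta)$-accurate with $$\beta\le 2\min\Bigg\{\sum_{i=1}^{i^*}\exp\Big(\frac{-2^{i-1}\alpha C^2}{s^2}\Big);\ \exp\big(-\alpha I_{ch}(P_0,P_1)\big)\Bigg\},$$ where $i^*=\lceil\log_2\big(\frac{n-1}{\alpha}\big)\rceil$; that is, $\mathbb{P}\{\hat k\notin[k^\star-\alpha,k^\star+\alpha]\}$ is at most the right-hand side.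
   Context: $[a]=\{1,\dots,a\}$. All logarithms are natural. An estimator $\hat k$ of the change-point $k^\star$ is $(\alpha,\beta)$-accurate if $\mathbb{P}\{\hat k\notin[k^\star-\alpha,k^\star+\alpha]\}=\beta$. Chernoff information: $I_{ch}(P_0,P_1)=-\min_{\lambda\in(0,1)}\log\big(\sum_{x}P_0(x)^\lambda P_1(x)^{1-\lambda}\big)$. $D_\infty(P\|Q)=\log\max_x \frac{P(x)}{Q(x)}$ and $D^J_\infty(P,Q)=D_\infty(P\|Q)+D_\infty(Q\|P)$. *)

theory Defs
  imports "HOL-Probability.Probability"
begin

definition llr :: "'a pmf \<Rightarrow> 'a pmf \<Rightarrow> 'a \<Rightarrow> real" where
  "llr P0 P1 x = ln (pmf P1 x / pmf P0 x)"

definition loglik :: "'a pmf \<Rightarrow> 'a pmf \<Rightarrow> nat \<Rightarrow> (nat \<Rightarrow> 'a) \<Rightarrow> nat \<Rightarrow> real" where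
  "loglik P0 P1 n D k = (\<Sum>i=k..n. llr P0 P1 (D i))"

definition dataset :: "'a pmf \<Rightarrow> 'a pmf \<Rightarrow> nat \<Rightarrow> nat \<Rightarrow> (nat \<Rightarrow> 'a) pmf" where
  "dataset P0 P1 n kstar = Pi_pmf {1..n} undefined (\<lambda>i. if i < kstar then P0 else P1)"

definition KL :: "'a::finite pmf \<Rightarrow> 'a pmf \<Rightarrow> real" where
  "KL P Q = (\<Sum>x\<in>UNIV. pmf P x * ln (pmf P x / pmf Q x))"

definition Dinf :: "'a::finite pmf \<Rightarrow> 'a pmf \<Rightarrow> real" where
  "Dinf P Q = ln (Max ((\<lambda>x. pmf P x / pmf Q x) ` UNIV))"

definition DinfJ :: "'a::finite pmf \<Rightarrow> 'a pmf \<Rightarrow> real" where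
  "DinfJ P Q = Dinf P Q + Dinf Q P"

definition chernoff_info :: "'a::finite pmf \<Rightarrow> 'a pmf \<Rightarrow> real" where
  "chernoff_info P0 P1 =
     - (INF t\<in>{0<..<1::real}. ln (\<Sum>x\<in>UNIV. pmf P0 x powr t * pmf P1 x powr (1 - t)))"

end

theory Submission
  imports Defs
begin

text \<open>
  If the maximiser khat lies more than \<open>\<alpha>\<close> to the right of kstar, the log-likelihood
  ratios ln (P0/P1) of the samples with indices kstar, ..., khat - 1, all drawn from P1, have a
  nonnegative sum: a random walk with drift -KL(P1||P0) is nonnegative at some time at least
  \<open>\<alpha>\<close>. Symmetrically, an estimate too far to the left makes the walk of the ratios
  ln (P1/P0) under P0, read backwards from kstar - 1, nonnegative at some time at least \<open>\<alpha>\<close>.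

  If the steps X of such a walk satisfy E exp (t X) \<le> exp (-r) with t, r \<ge> 0, the running
  products of exp (t X + r) form a nonnegative supermartingale of mean at most 1, so by Ville's
  maximal inequality the walk is nonnegative at a time at least \<open>\<alpha>\<close> with probability at most
  exp (-\<open>\<alpha>\<close> r). Hoeffding's lemma yields r = 2 KL^2 / s^2, and the Chernoff coefficient
  \<open>\<rho>\<close>(t) = \<open>\<Sum>\<close> P0^t P1^(1-t) yields r = -ln \<open>\<rho>\<close>(t) for every t, hence exp (-\<open>\<alpha>\<close> I_ch).
  A union bound over the two sides gives the factor 2; the Hoeffding bound obtained this way is
  already below the first term of the sum in the statement.
\<close>

lemma sum_pmf_UNIV: "(\<Sum>x\<in>UNIV. pmf (Q :: 'a::finite pmf) x) = 1"
  by (rule sum_pmf_eq_1) auto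

lemma nn_integral_pmf_finite:
  fixes Q :: "'a::finite pmf"
  assumes "\<And>x. 0 \<le> f x"
  shows "(\<integral>\<^sup>+x. ennreal (f x) \<partial>Q) = ennreal (\<Sum>x\<in>UNIV. pmf Q x * f x)"
  using assms
  by (subst nn_integral_measure_pmf_support[where A = UNIV])
     (auto simp: ennreal_mult'[symmetric] mult.commute intro!: sum_ennreal)

lemma measure_bind_pmf_finite:
  fixes M :: "'a::finite pmf"
  shows "measure_pmf.prob (M \<bind> N) X = (\<Sum>y\<in>UNIV. pmf M y * measure_pmf.prob (N y) X)"
proof -
  have "emeasure (measure_pmf (M \<bind> N)) X = ennreal (\<Sum>y\<in>UNIV. pmf M y * measure_pmf.prob (N y) X)"
    by (subst emeasure_bind_pmf) (simp add: measure_pmf.emeasure_eq_measure nn_integral_pmf_finite)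
  moreover have "0 \<le> (\<Sum>y\<in>UNIV. pmf M y * measure_pmf.prob (N y) X)"
    by (intro sum_nonneg) simp
  ultimately show ?thesis
    by (simp add: measure_pmf.emeasure_eq_measure)
qed

lemma hoeffding_lemma_pmf:
  fixes Q :: "'a::finite pmf" and X :: "'a \<Rightarrow> real"
  assumes "\<And>x. a \<le> X x" "\<And>x. X x \<le> b" "0 \<le> l"
  shows "(\<Sum>x\<in>UNIV. pmf Q x * exp (l * X x))
           \<le> exp (l * (\<Sum>x\<in>UNIV. pmf Q x * X x) + l\<^sup>2 * (b - a)\<^sup>2 / 8)"
proof (cases "l = 0")
  case True
  then show ?thesis by (simp add: sum_pmf_UNIV)
next
  case False
  interpret interval_bounded_random_variable "measure_pmf Q" X a b
    by unfold_locales (use assms in auto)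
  define \<mu> where "\<mu> = (\<Sum>x\<in>UNIV. pmf Q x * X x)"
  have "measure_pmf.expectation Q X = \<mu>"
    by (subst integral_measure_pmf_real[where A = UNIV]) (auto simp: \<mu>_def mult.commute)
  then have "ennreal (\<Sum>x\<in>UNIV. pmf Q x * exp (l * (X x - \<mu>))) \<le> ennreal (exp (l\<^sup>2 * (b - a)\<^sup>2 / 8))"
    using Hoeffdings_lemma_nn_integral[of l] False assms(3) by (simp add: nn_integral_pmf_finite)
  then have "(\<Sum>x\<in>UNIV. pmf Q x * exp (l * (X x - \<mu>))) \<le> exp (l\<^sup>2 * (b - a)\<^sup>2 / 8)"
    by (simp add: ennreal_le_iff)
  moreover have "(\<Sum>x\<in>UNIV. pmf Q x * exp (l * X x))
      = exp (l * \<mu>) * (\<Sum>x\<in>UNIV. pmf Q x * exp (l * (X x - \<mu>)))"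
    by (simp add: sum_distrib_left algebra_simps flip: exp_add)
  ultimately show ?thesis
    by (simp add: \<mu>_def exp_add)
qed

lemma prob_Pi_pmf_insert_finite:
  fixes p :: "'i \<Rightarrow> 'a::finite pmf"
  assumes "finite A" "j \<notin> A"
  shows "measure_pmf.prob (Pi_pmf (insert j A) d p) E
           = (\<Sum>y\<in>UNIV. pmf (p j) y * measure_pmf.prob (Pi_pmf A d p) {f. f(j := y) \<in> E})"
  using assms
  by (simp add: Pi_pmf_insert' measure_bind_pmf_finite bind_return_pmf' map_pmf_def[symmetric] vimage_def)

definition prefix_prod_ge :: "'i list \<Rightarrow> ('i \<Rightarrow> 'a \<Rightarrow> real) \<Rightarrow> real \<Rightarrow> ('i \<Rightarrow> 'a) set" where
  "prefix_prod_ge js g c = {D. \<exists>m\<le>length js. c \<le> (\<Prod>j\<leftarrow>take m js. g j (D j))}"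

lemma upd_prefix_prod_ge_Cons:
  assumes "1 < c" "j \<notin> set js"
  shows "{f. f(j := y) \<in> prefix_prod_ge (j # js) g c}
           = {f. \<exists>m\<le>length js. c \<le> g j y * (\<Prod>i\<leftarrow>take m js. g i (f i))}"
proof -
  have "(\<Prod>i\<leftarrow>take m js. g i ((f(j := y)) i)) = (\<Prod>i\<leftarrow>take m js. g i (f i))" for f m
    using assms(2) by (intro arg_cong[where f = prod_list] map_cong) (auto dest: in_set_takeD)
  then show ?thesis
    using assms(1) by (simp add: prefix_prod_ge_def less_Suc_eq_le[symmetric] Ex_less_Suc2)
qed

text \<open>Ville's maximal inequality, by induction on the list: on the slice where the first
  coordinate j equals y, the event for threshold c is the event for the tail with threshold
  c / g j y.\<close>

lemma prob_prefix_prod_ge_le: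
  fixes p :: "'i \<Rightarrow> 'a::finite pmf" and g :: "'i \<Rightarrow> 'a \<Rightarrow> real"
  assumes "finite I" "set js \<subseteq> I" "distinct js"
    and "\<And>j x. j \<in> set js \<Longrightarrow> 0 \<le> g j x"
    and "\<And>j. j \<in> set js \<Longrightarrow> (\<Sum>x\<in>UNIV. pmf (p j) x * g j x) \<le> 1"
    and "0 < c"
  shows "measure_pmf.prob (Pi_pmf I d p) (prefix_prod_ge js g c) \<le> 1 / c"
  using assms
proof (induction js arbitrary: I c)
  case Nil
  then show ?case
    by (cases "c \<le> 1") (auto simp: prefix_prod_ge_def intro: order.trans[OF measure_pmf.prob_le_1])
next
  case (Cons j js)
  show ?case
  proof (cases "c \<le> 1")
    case True
    then show ?thesis
      using Cons.prems(6) by (auto intro: order.trans[OF measure_pmf.prob_le_1])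
  next
    case False
    define A where "A = I - {j}"
    have I: "I = insert j A" "j \<notin> A" "finite A"
      using Cons.prems(1,2) by (auto simp: A_def)
    have slice: "measure_pmf.prob (Pi_pmf A d p) {f. f(j := y) \<in> prefix_prod_ge (j # js) g c}
        \<le> g j y / c" for y
    proof (cases "g j y = 0")
      case True
      then show ?thesis
        using False Cons.prems(3) by (subst upd_prefix_prod_ge_Cons) auto
    next
      case False
      then have "0 < g j y"
        using Cons.prems(4) by (simp add: order_less_le)
      then have "{f. f(j := y) \<in> prefix_prod_ge (j # js) g c} = prefix_prod_ge js g (c / g j y)"
        using \<open>\<not> c \<le> 1\<close> Cons.prems(3)
        by (subst upd_prefix_prod_ge_Cons) (auto simp: prefix_prod_ge_def pos_divide_le_eq mult.commute)
      also have "measure_pmf.prob (Pi_pmf A d p) \<dots> \<le> 1 / (c / g j y)"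
        using Cons.prems \<open>0 < g j y\<close> I by (intro Cons.IH) auto
      finally show ?thesis
        by simp
    qed
    have "measure_pmf.prob (Pi_pmf I d p) (prefix_prod_ge (j # js) g c)
        \<le> (\<Sum>y\<in>UNIV. pmf (p j) y * (g j y / c))"
      unfolding I(1) prob_Pi_pmf_insert_finite[OF I(3,2)] by (intro sum_mono mult_left_mono slice) auto
    also have "\<dots> = (\<Sum>y\<in>UNIV. pmf (p j) y * g j y) / c"
      by (simp add: sum_divide_distrib)
    also have "\<dots> \<le> 1 / c"
      using Cons.prems by (intro divide_right_mono) auto
    finally show ?thesis .
  qed
qed

definition walk_nonneg_after :: "nat \<Rightarrow> 'i list \<Rightarrow> ('a \<Rightarrow> real) \<Rightarrow> ('i \<Rightarrow> 'a) set" where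
  "walk_nonneg_after m\<^sub>0 js X = {D. \<exists>m. m\<^sub>0 \<le> m \<and> m \<le> length js \<and> 0 \<le> (\<Sum>j\<leftarrow>take m js. X (D j))}"

lemma prod_list_map_exp: "(\<Prod>x\<leftarrow>xs. exp (f x :: real)) = exp (\<Sum>x\<leftarrow>xs. f x)"
  by (induction xs) (simp_all add: exp_add)

lemma prob_walk_nonneg_after_le:
  fixes p :: "'i \<Rightarrow> 'a::finite pmf" and X :: "'a \<Rightarrow> real"
  assumes "finite I" "set js \<subseteq> I" "distinct js" "\<And>j. j \<in> set js \<Longrightarrow> p j = Q"
    and "0 \<le> t" "0 \<le> r" and mgf: "(\<Sum>x\<in>UNIV. pmf Q x * exp (t * X x)) \<le> exp (- r)"
  shows "measure_pmf.prob (Pi_pmf I d p) (walk_nonneg_after m\<^sub>0 js X) \<le> exp (- (m\<^sub>0 * r))"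
proof -
  define g where "g = (\<lambda>(_::'i) x. exp (t * X x + r))"
  have prefix: "(\<Prod>j\<leftarrow>take m js. g j (D j)) = exp (t * (\<Sum>j\<leftarrow>take m js. X (D j)) + m * r)"
    if "m \<le> length js" for D m
    using that by (simp add: g_def prod_list_map_exp sum_list_addf sum_list_const_mult sum_list_triv)
  have "walk_nonneg_after m\<^sub>0 js X \<subseteq> prefix_prod_ge js g (exp (m\<^sub>0 * r))"
    unfolding walk_nonneg_after_def prefix_prod_ge_def
  proof safe
    fix D m
    assume m: "m\<^sub>0 \<le> m" "m \<le> length js" "0 \<le> (\<Sum>j\<leftarrow>take m js. X (D j))"
    have "m\<^sub>0 * r \<le> t * (\<Sum>j\<leftarrow>take m js. X (D j)) + m * r"
      using m assms(5,6) by (simp add: add_increasing mult_right_mono)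
    then show "\<exists>m\<le>length js. exp (m\<^sub>0 * r) \<le> (\<Prod>j\<leftarrow>take m js. g j (D j))"
      using m prefix by auto
  qed
  then have "measure_pmf.prob (Pi_pmf I d p) (walk_nonneg_after m\<^sub>0 js X)
      \<le> measure_pmf.prob (Pi_pmf I d p) (prefix_prod_ge js g (exp (m\<^sub>0 * r)))"
    by (rule measure_pmf.finite_measure_mono) simp
  also have "\<dots> \<le> 1 / exp (m\<^sub>0 * r)"
  proof (rule prob_prefix_prod_ge_le)
    have "(\<Sum>x\<in>UNIV. pmf Q x * g j x) = exp r * (\<Sum>x\<in>UNIV. pmf Q x * exp (t * X x))" for j
      by (simp add: g_def exp_add sum_distrib_left algebra_simps)
    also have "\<dots> \<le> exp r * exp (- r)"
      using mgf by simp
    finally show "(\<Sum>x\<in>UNIV. pmf (p j) x * g j x) \<le> 1" if "j \<in> set js" for j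
      using that assms(4) by (simp add: exp_minus)
  qed (use assms in \<open>auto simp: g_def\<close>)
  finally show ?thesis
    by (simp add: exp_minus divide_inverse)
qed

lemma prob_walk_nonneg_after_hoeffding:
  fixes p :: "'i \<Rightarrow> 'a::finite pmf" and X :: "'a \<Rightarrow> real"
  assumes "finite I" "set js \<subseteq> I" "distinct js" "\<And>j. j \<in> set js \<Longrightarrow> p j = Q"
    and "\<And>x. a \<le> X x" "\<And>x. X x \<le> b"
    and "0 \<le> \<mu>" "(\<Sum>x\<in>UNIV. pmf Q x * X x) \<le> - \<mu>"
  shows "measure_pmf.prob (Pi_pmf I d p) (walk_nonneg_after m\<^sub>0 js X)
           \<le> exp (- (2 * real m\<^sub>0 * \<mu>\<^sup>2) / (b - a)\<^sup>2)"
proof -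
  define q where "q = (b - a)\<^sup>2"
  \<comment> \<open>\<open>\<theta>\<close> minimises the exponent \<open>- \<theta> * \<mu> + \<theta>\<^sup>2 * q / 8\<close> of Hoeffding's bound\<close>
  define \<theta> where "\<theta> = 4 * \<mu> / q"
  have "0 \<le> \<theta>"
    using assms(7) by (simp add: \<theta>_def q_def)
  have "(\<Sum>x\<in>UNIV. pmf Q x * exp (\<theta> * X x))
      \<le> exp (\<theta> * (\<Sum>x\<in>UNIV. pmf Q x * X x) + \<theta>\<^sup>2 * (b - a)\<^sup>2 / 8)"
    using assms(5,6) \<open>0 \<le> \<theta>\<close> by (rule hoeffding_lemma_pmf)
  also have "\<dots> \<le> exp (- \<theta> * \<mu> + \<theta>\<^sup>2 * (b - a)\<^sup>2 / 8)"
    using mult_left_mono[OF assms(8) \<open>0 \<le> \<theta>\<close>] by simp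
  also have "- \<theta> * \<mu> + \<theta>\<^sup>2 * (b - a)\<^sup>2 / 8 = - (2 * \<mu>\<^sup>2 / (b - a)\<^sup>2)"
    unfolding q_def[symmetric] \<theta>_def by (cases "q = 0") (simp_all add: power2_eq_square field_simps)
  finally have "measure_pmf.prob (Pi_pmf I d p) (walk_nonneg_after m\<^sub>0 js X)
      \<le> exp (- (m\<^sub>0 * (2 * \<mu>\<^sup>2 / (b - a)\<^sup>2)))"
    using \<open>0 \<le> \<theta>\<close> by (intro prob_walk_nonneg_after_le[OF assms(1-4)]) auto
  then show ?thesis
    by (simp add: ac_simps)
qed

lemma llr_swap: "llr P Q x = - llr Q P x"
  unfolding llr_def by (metis inverse_divide ln_inverse)

lemma sum_pmf_llr: "(\<Sum>x\<in>UNIV. pmf Q x * llr Q P x) = - KL Q P"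
  unfolding llr_swap[of Q P] by (simp add: KL_def llr_def sum_negf)

lemma KL_nonneg:
  fixes P Q :: "'a::finite pmf"
  assumes "set_pmf P = UNIV" "set_pmf Q = UNIV"
  shows "0 \<le> KL P Q"
proof -
  have pos: "0 < pmf P x" "0 < pmf Q x" for x
    using assms by (auto simp: pmf_positive_iff)
  have "pmf P x * llr P Q x \<le> pmf Q x - pmf P x" for x
  proof -
    have "pmf P x * llr P Q x \<le> pmf P x * (pmf Q x / pmf P x - 1)"
      unfolding llr_def using pos[of x] by (intro mult_left_mono ln_le_minus_one) auto
    also have "\<dots> = pmf Q x - pmf P x"
      using pos[of x] by (simp add: field_simps)
    finally show ?thesis .
  qed
  then have "(\<Sum>x\<in>UNIV. pmf P x * llr P Q x) \<le> (\<Sum>x\<in>UNIV. pmf Q x - pmf P x)"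
    by (intro sum_mono)
  also have "\<dots> = 0"
    by (simp add: sum_subtractf sum_pmf_UNIV)
  finally show ?thesis
    by (simp add: sum_pmf_llr)
qed

lemma llr_le_Dinf:
  fixes P Q :: "'a::finite pmf"
  assumes "set_pmf P = UNIV" "set_pmf Q = UNIV"
  shows "llr Q P x \<le> Dinf P Q"
proof -
  have "0 < pmf P x / pmf Q x"
    using assms by (simp add: pmf_positive_iff)
  moreover have "pmf P x / pmf Q x \<le> Max ((\<lambda>x. pmf P x / pmf Q x) ` UNIV)"
    by (rule Max_ge) auto
  ultimately show ?thesis
    unfolding llr_def Dinf_def by (metis ln_le_cancel_iff order_less_le_trans)
qed

lemma neg_Dinf_le_llr:
  fixes P Q :: "'a::finite pmf"
  assumes "set_pmf P = UNIV" "set_pmf Q = UNIV"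
  shows "- Dinf Q P \<le> llr Q P x"
  using llr_le_Dinf[OF assms(2,1), of x] by (simp add: llr_swap[of Q P])

definition chernoff_coeff :: "'a::finite pmf \<Rightarrow> 'a pmf \<Rightarrow> real \<Rightarrow> real" where
  "chernoff_coeff P Q t = (\<Sum>x\<in>UNIV. pmf P x powr t * pmf Q x powr (1 - t))"

lemma chernoff_coeff_pos:
  fixes P Q :: "'a::finite pmf"
  assumes "set_pmf P = UNIV" "set_pmf Q = UNIV"
  shows "0 < chernoff_coeff P Q t"
  unfolding chernoff_coeff_def using assms
  by (intro sum_pos) (auto simp: set_pmf_iff[symmetric])

lemma chernoff_coeff_le_1:
  fixes P Q :: "'a::finite pmf"
  assumes "set_pmf P = UNIV" "set_pmf Q = UNIV" "0 \<le> t" "t \<le> 1"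
  shows "chernoff_coeff P Q t \<le> 1"
proof -
  have "chernoff_coeff P Q t \<le> (\<Sum>x\<in>UNIV. t * pmf P x + (1 - t) * pmf Q x)"
    unfolding chernoff_coeff_def using assms
    by (intro sum_mono Youngs_inequality_0) (auto simp: pmf_positive_iff)
  also have "\<dots> = 1"
    by (simp add: sum.distrib flip: sum_distrib_left add: sum_pmf_UNIV)
  finally show ?thesis .
qed

lemma sum_pmf_exp_llr:
  fixes P Q :: "'a::finite pmf"
  assumes "set_pmf P = UNIV" "set_pmf Q = UNIV"
  shows "(\<Sum>x\<in>UNIV. pmf Q x * exp (t * llr Q P x)) = chernoff_coeff P Q t"
  unfolding chernoff_coeff_def
proof (rule sum.cong)
  fix x
  have "0 < pmf P x" "0 < pmf Q x"
    using assms by (auto simp: pmf_positive_iff)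
  then have "pmf Q x * exp (t * llr Q P x) = exp (ln (pmf Q x) + t * (ln (pmf P x) - ln (pmf Q x)))"
    by (simp add: llr_def ln_div exp_add)
  also have "\<dots> = exp (t * ln (pmf P x)) * exp ((1 - t) * ln (pmf Q x))"
    by (simp add: algebra_simps flip: exp_add)
  finally show "pmf Q x * exp (t * llr Q P x) = pmf P x powr t * pmf Q x powr (1 - t)"
    using \<open>0 < pmf P x\<close> \<open>0 < pmf Q x\<close> by (simp add: powr_def)
qed simp

lemma chernoff_info_commute: "chernoff_info P Q = chernoff_info Q P"
proof -
  have "chernoff_coeff Q P t = chernoff_coeff P Q (1 - t)" for t
    by (simp add: chernoff_coeff_def mult.commute)
  then have "(INF t\<in>{0<..<1}. ln (chernoff_coeff Q P t))
      = (INF u\<in>(\<lambda>t. 1 - t) ` {0<..<1::real}. ln (chernoff_coeff P Q u))"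
    by (simp add: image_image)
  also have "(\<lambda>t. 1 - t) ` {0<..<1::real} = {0<..<1}"
    by (auto simp: image_iff intro!: bexI[where x = "1 - _"])
  finally show ?thesis
    by (simp add: chernoff_info_def chernoff_coeff_def)
qed

lemma le_exp_neg_chernoff_info:
  assumes "0 < m\<^sub>0" "\<And>t. t \<in> {0<..<1} \<Longrightarrow> q \<le> exp (m\<^sub>0 * ln (chernoff_coeff P Q t))"
  shows "q \<le> exp (- real m\<^sub>0 * chernoff_info P Q)"
proof (cases "q \<le> 0")
  case True
  then show ?thesis
    using exp_gt_zero[of "- real m\<^sub>0 * chernoff_info P Q"] by linarith
next
  case False
  have "ln q / m\<^sub>0 \<le> (INF t\<in>{0<..<1::real}. ln (chernoff_coeff P Q t))"
  proof (rule cINF_greatest)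
    fix t :: real
    assume "t \<in> {0<..<1}"
    then have "ln q \<le> m\<^sub>0 * ln (chernoff_coeff P Q t)"
      using assms(2) False by (metis exp_le_cancel_iff exp_ln not_le)
    then show "ln q / m\<^sub>0 \<le> ln (chernoff_coeff P Q t)"
      using assms(1) by (simp add: divide_le_eq mult.commute)
  qed simp
  then have "exp (ln q) \<le> exp (- real m\<^sub>0 * chernoff_info P Q)"
    using assms(1) by (simp add: chernoff_info_def chernoff_coeff_def divide_le_eq mult.commute)
  then show ?thesis
    using False by simp
qed

lemma prob_llr_walk_hoeffding:
  fixes P Q :: "'a::finite pmf" and p :: "'i \<Rightarrow> 'a pmf"
  assumes "set_pmf P = UNIV" "set_pmf Q = UNIV"
    and "finite I" "set js \<subseteq> I" "distinct js" "\<And>j. j \<in> set js \<Longrightarrow> p j = Q"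
    and "0 \<le> \<mu>" "\<mu> \<le> KL Q P"
  shows "measure_pmf.prob (Pi_pmf I d p) (walk_nonneg_after m\<^sub>0 js (llr Q P))
           \<le> exp (- (2 * real m\<^sub>0 * \<mu>\<^sup>2) / (DinfJ Q P)\<^sup>2)"
proof -
  have "measure_pmf.prob (Pi_pmf I d p) (walk_nonneg_after m\<^sub>0 js (llr Q P))
      \<le> exp (- (2 * real m\<^sub>0 * \<mu>\<^sup>2) / (Dinf P Q - - Dinf Q P)\<^sup>2)"
    by (intro prob_walk_nonneg_after_hoeffding[where Q = Q] neg_Dinf_le_llr llr_le_Dinf)
      (use assms in \<open>auto simp: sum_pmf_llr\<close>)
  then show ?thesis
    by (simp add: DinfJ_def add.commute)
qed

lemma prob_llr_walk_chernoff:
  fixes P Q :: "'a::finite pmf" and p :: "'i \<Rightarrow> 'a pmf"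
  assumes "set_pmf P = UNIV" "set_pmf Q = UNIV"
    and "finite I" "set js \<subseteq> I" "distinct js" "\<And>j. j \<in> set js \<Longrightarrow> p j = Q"
    and "0 < m\<^sub>0"
  shows "measure_pmf.prob (Pi_pmf I d p) (walk_nonneg_after m\<^sub>0 js (llr Q P))
           \<le> exp (- real m\<^sub>0 * chernoff_info P Q)"
proof (rule le_exp_neg_chernoff_info[OF \<open>0 < m\<^sub>0\<close>])
  fix t :: real
  assume "t \<in> {0<..<1}"
  then have "0 \<le> - ln (chernoff_coeff P Q t)"
    using chernoff_coeff_pos[OF assms(1,2)] chernoff_coeff_le_1[OF assms(1,2)] by simp
  moreover have "(\<Sum>x\<in>UNIV. pmf Q x * exp (t * llr Q P x)) \<le> exp (- (- ln (chernoff_coeff P Q t)))"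
    using assms(1,2) by (simp add: sum_pmf_exp_llr chernoff_coeff_pos)
  ultimately have "measure_pmf.prob (Pi_pmf I d p) (walk_nonneg_after m\<^sub>0 js (llr Q P))
      \<le> exp (- (m\<^sub>0 * - ln (chernoff_coeff P Q t)))"
    using \<open>t \<in> {0<..<1}\<close> by (intro prob_walk_nonneg_after_le[where Q = Q]) (use assms in auto)
  then show "measure_pmf.prob (Pi_pmf I d p) (walk_nonneg_after m\<^sub>0 js (llr Q P))
      \<le> exp (m\<^sub>0 * ln (chernoff_coeff P Q t))"
    by simp
qed

lemma loglik_split:
  assumes "a \<le> b" "b \<le> Suc n"
  shows "loglik P0 P1 n D a = (\<Sum>i=a..<b. llr P0 P1 (D i)) + loglik P0 P1 n D b"
  unfolding loglik_def using assms
  by (metis atLeastLessThanSuc_atLeastAtMost sum.atLeastLessThan_concat)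

lemma late_argmax_imp_walk:
  assumes "kstar + m\<^sub>0 \<le> k" "k \<le> n" "loglik P0 P1 n D kstar \<le> loglik P0 P1 n D k"
  shows "D \<in> walk_nonneg_after m\<^sub>0 [kstar..<Suc n] (llr P1 P0)"
proof -
  have "(\<Sum>j\<leftarrow>take (k - kstar) [kstar..<Suc n]. llr P1 P0 (D j)) = - (\<Sum>i=kstar..<k. llr P0 P1 (D i))"
    using assms(1,2) by (simp add: llr_swap[of P1 P0] interv_sum_list_conv_sum_set_nat sum_negf)
  also have "\<dots> \<ge> 0"
    using assms loglik_split[of kstar k n P0 P1 D] by simp
  finally show ?thesis
    unfolding walk_nonneg_after_def using assms(1,2) by (intro CollectI exI[of _ "k - kstar"]) auto
qed

lemma early_argmax_imp_walk:
  assumes "1 \<le> k" "k + m\<^sub>0 \<le> kstar" "kstar \<le> Suc n" "loglik P0 P1 n D kstar \<le> loglik P0 P1 n D k"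
  shows "D \<in> walk_nonneg_after m\<^sub>0 (rev [1..<kstar]) (llr P0 P1)"
proof -
  have "(\<Sum>j\<leftarrow>take (kstar - k) (rev [1..<kstar]). llr P0 P1 (D j)) = (\<Sum>i=k..<kstar. llr P0 P1 (D i))"
    using assms(1,2)
    by (simp add: take_rev rev_map[symmetric] sum_list_rev interv_sum_list_conv_sum_set_nat)
  also have "\<dots> \<ge> 0"
    using assms loglik_split[of k kstar n P0 P1 D] by simp
  finally show ?thesis
    unfolding walk_nonneg_after_def using assms(1,2) by (intro CollectI exI[of _ "kstar - k"]) auto
qed

lemma far_argmax_imp_walk:
  assumes "1 < kstar" "kstar \<le> n" "k \<in> {1..n}" "loglik P0 P1 n D kstar \<le> loglik P0 P1 n D k"
    and "int k \<notin> {int kstar - int m\<^sub>0 .. int kstar + int m\<^sub>0}"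
  shows "D \<in> walk_nonneg_after m\<^sub>0 [kstar..<Suc n] (llr P1 P0)
           \<union> walk_nonneg_after m\<^sub>0 (rev [1..<kstar]) (llr P0 P1)"
proof (cases "kstar < k")
  case True
  then show ?thesis
    using assms late_argmax_imp_walk[of kstar m\<^sub>0 k n P0 P1 D] by auto
next
  case False
  then show ?thesis
    using assms early_argmax_imp_walk[of k m\<^sub>0 kstar n P0 P1 D] by auto
qed

lemma prob_late_walk_le:
  fixes P0 P1 :: "'a::finite pmf"
  assumes "set_pmf P0 = UNIV" "set_pmf P1 = UNIV" "1 \<le> kstar" "0 < m\<^sub>0" "0 \<le> \<mu>" "\<mu> \<le> KL P1 P0"
  shows "measure_pmf.prob (dataset P0 P1 n kstar) (walk_nonneg_after m\<^sub>0 [kstar..<Suc n] (llr P1 P0))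
           \<le> min (exp (- (2 * real m\<^sub>0 * \<mu>\<^sup>2) / (DinfJ P0 P1)\<^sup>2))
                  (exp (- real m\<^sub>0 * chernoff_info P0 P1))"
proof -
  have walk: "set [kstar..<Suc n] \<subseteq> {1..n}" "distinct [kstar..<Suc n]"
    "\<And>j. j \<in> set [kstar..<Suc n] \<Longrightarrow> (if j < kstar then P0 else P1) = P1"
    using assms(3) by auto
  show ?thesis
    using prob_llr_walk_hoeffding[OF assms(1,2) finite_atLeastAtMost walk assms(5,6)]
      prob_llr_walk_chernoff[OF assms(1,2) finite_atLeastAtMost walk assms(4)]
    by (simp add: dataset_def DinfJ_def add.commute)
qed

lemma prob_early_walk_le:
  fixes P0 P1 :: "'a::finite pmf"
  assumes "set_pmf P0 = UNIV" "set_pmf P1 = UNIV" "kstar \<le> Suc n" "0 < m\<^sub>0" "0 \<le> \<mu>" "\<mu> \<le> KL P0 P1"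
  shows "measure_pmf.prob (dataset P0 P1 n kstar) (walk_nonneg_after m\<^sub>0 (rev [1..<kstar]) (llr P0 P1))
           \<le> min (exp (- (2 * real m\<^sub>0 * \<mu>\<^sup>2) / (DinfJ P0 P1)\<^sup>2))
                  (exp (- real m\<^sub>0 * chernoff_info P0 P1))"
proof -
  have walk: "set (rev [1..<kstar]) \<subseteq> {1..n}" "distinct (rev [1..<kstar])"
    "\<And>j. j \<in> set (rev [1..<kstar]) \<Longrightarrow> (if j < kstar then P0 else P1) = P0"
    using assms(3) by auto
  show ?thesis
    using prob_llr_walk_hoeffding[OF assms(2,1) finite_atLeastAtMost walk assms(5,6)]
      prob_llr_walk_chernoff[OF assms(2,1) finite_atLeastAtMost walk assms(4)]
    by (simp add: dataset_def chernoff_info_commute)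
qed

lemma prob_changepoint_error_le:
  fixes P0 P1 :: "'a::finite pmf" and khat :: "(nat \<Rightarrow> 'a) \<Rightarrow> nat"
  assumes "set_pmf P0 = UNIV" "set_pmf P1 = UNIV" "1 < kstar" "kstar \<le> n" "0 < m\<^sub>0"
    and "\<And>D. khat D \<in> {1..n}" "\<And>D. loglik P0 P1 n D kstar \<le> loglik P0 P1 n D (khat D)"
  shows "measure_pmf.prob (dataset P0 P1 n kstar)
           {D. int (khat D) \<notin> {int kstar - int m\<^sub>0 .. int kstar + int m\<^sub>0}}
         \<le> 2 * min (exp (- (2 * real m\<^sub>0 * (min (KL P0 P1) (KL P1 P0))\<^sup>2) / (DinfJ P0 P1)\<^sup>2))
                    (exp (- real m\<^sub>0 * chernoff_info P0 P1))"
    (is "measure_pmf.prob ?M ?E \<le> 2 * ?bound")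
proof -
  let ?R = "walk_nonneg_after m\<^sub>0 [kstar..<Suc n] (llr P1 P0)"
  let ?L = "walk_nonneg_after m\<^sub>0 (rev [1..<kstar]) (llr P0 P1)"
  have KL: "0 \<le> KL P0 P1" "0 \<le> KL P1 P0"
    using KL_nonneg assms(1,2) by auto
  have "?E \<subseteq> ?R \<union> ?L"
    using far_argmax_imp_walk[OF assms(3,4,6,7)] by blast
  then have "measure_pmf.prob ?M ?E \<le> measure_pmf.prob ?M (?R \<union> ?L)"
    by (rule measure_pmf.finite_measure_mono) simp
  also have "\<dots> \<le> measure_pmf.prob ?M ?R + measure_pmf.prob ?M ?L"
    by (rule measure_Un_le) simp_all
  also have "\<dots> \<le> 2 * ?bound"
  proof -
    have "measure_pmf.prob ?M ?R \<le> ?bound"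
      by (rule prob_late_walk_le) (use assms KL in auto)
    moreover have "measure_pmf.prob ?M ?L \<le> ?bound"
      by (rule prob_early_walk_le) (use assms KL in auto)
    ultimately show ?thesis
      by linarith
  qed
  finally show ?thesis .
qed

theorem theorem3p1:
  fixes P0 P1 :: "'a::finite pmf"
    and n kstar \<alpha> :: nat
    and khat :: "(nat \<Rightarrow> 'a) \<Rightarrow> nat"
  assumes supp0: "set_pmf P0 = UNIV" and supp1: "set_pmf P1 = UNIV"
    and n_gt: "n > 1"
    and kstar: "1 < kstar" "kstar \<le> n"
    and alpha: "1 \<le> \<alpha>" "\<alpha> \<le> n"
    and khat_range: "\<And>D. khat D \<in> {1..n}"
    and khat_argmax: "\<And>D k. k \<in> {1..n} \<Longrightarrow> loglik P0 P1 n D k \<le> loglik P0 P1 n D (khat D)"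
  shows "measure_pmf.prob (dataset P0 P1 n kstar)
           {D. int (khat D) \<notin> {int kstar - int \<alpha> .. int kstar + int \<alpha>}}
         \<le> 2 * min
             (\<Sum>i=1..nat \<lceil>log 2 ((real n - 1) / real \<alpha>)\<rceil>.
                exp (- (2 ^ (i - 1) * real \<alpha> * (min (KL P0 P1) (KL P1 P0))\<^sup>2)
                      / (DinfJ P0 P1)\<^sup>2))
             (exp (- real \<alpha> * chernoff_info P0 P1))"
proof -
  let ?C = "min (KL P0 P1) (KL P1 P0)"
  let ?i = "nat \<lceil>log 2 ((real n - 1) / real \<alpha>)\<rceil>"
  let ?E = "{D. int (khat D) \<notin> {int kstar - int \<alpha> .. int kstar + int \<alpha>}}"
  have bound: "measure_pmf.prob (dataset P0 P1 n kstar) ?E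
      \<le> 2 * min (exp (- (2 * real \<alpha> * ?C\<^sup>2) / (DinfJ P0 P1)\<^sup>2))
                  (exp (- real \<alpha> * chernoff_info P0 P1))"
    using kstar alpha khat_range khat_argmax
    by (intro prob_changepoint_error_le[OF supp0 supp1]) auto
  show ?thesis
  proof (cases "\<alpha> < n - 1")
    case True
    then have "0 < log 2 ((real n - 1) / real \<alpha>)"
      using alpha by simp
    then have "1 \<le> ?i"
      by linarith
    then have "exp (- (2 * real \<alpha> * ?C\<^sup>2) / (DinfJ P0 P1)\<^sup>2)
        \<le> (\<Sum>i=1..?i. exp (- (2 ^ (i - 1) * real \<alpha> * ?C\<^sup>2) / (DinfJ P0 P1)\<^sup>2))"
      by (intro order_trans[OF _ member_le_sum[of 1]]) (auto simp: divide_right_mono)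
    then show ?thesis
      using bound by linarith
  next
    case False
    have "D \<notin> ?E" for D
      using False kstar khat_range[of D] by auto
    then have "?E = {}"
      by blast
    then show ?thesis
      by (simp add: sum_nonneg)
  qed
qed

end
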